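(* The transition function $F$, considered as an operator on the real Banach space $\mathcal M(\mathcal P(S))$ of signed Radon measures on $\mathcal P(S)$ with the total variation norm, is linear with operator norm $\|F\|=1$.
   Context: $T$ is an $n\times n$ stochastic matrix (transition matrix of a Markov chain on $S=\{1,\dots,n\}$); $O$ is a finite index set and for each $i\in O$, $M^{(i)}$ is an $n\times m$ stochastic matrix (observation matrix, observations in $V=\{1,\dots,m\}$). $\mathcal P(S)$ is the probability simplex in $\mathbb R^n$, $\delta(x)$ the point mass at $x\in S$. A (measurable) policy $g:\mathcal P(S)\to O$ has preimages $A_i=g^{-1}\{i\}$. $\alpha_{i,y}(z)=(zTM^{(i)})_y$ and, when $\alpha_{i,y}(z)>0$, $r_{i,y}(z)=\frac{\sum_{x,j}M^{(i)}_{x,y}T_{j,x}z_j\delta(x)}{\sum_{x,j}M^{(i)}_{x,y}T_{j,x}z_j}\in\mathcal P(S)$. The transition function is $F(\mu)=\sum_{i\in O}\sum_{y\in V}\int_{A_i}\alpha_{i,y}(z)\,\delta_{r_{i,y}(z)}\,d\mu(z)$ (terms with $\alpha_{i,y}(z)=0$ contribute zero), defined for signed Radon measures $\mu$ on $\mathcal P(S)$; it maps probability measures to probability measures. *)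

theory Defs
  imports "HOL-Analysis.Analysis" "HOL-Probability.Probability"
begin

text \<open>States S = the finite type 'n, observations V = the finite type 'm,
  observation indices O = the finite type 'o.  Points of P(S) are vectors
  z :: real^'n in the probability simplex.\<close>

definition prob_simplex :: "(real^'n::finite) set" where
  "prob_simplex = {z. (\<forall>j. 0 \<le> z $ j) \<and> (\<Sum>j\<in>UNIV. z $ j) = 1}"

definition PS :: "(real^'n::finite) measure" where
  "PS = restrict_space borel prob_simplex"

definition stochastic :: "real^'b::finite^'a::finite \<Rightarrow> bool" where
  "stochastic A \<longleftrightarrow> (\<forall>i j. 0 \<le> A $ i $ j) \<and> (\<forall>i. (\<Sum>j\<in>UNIV. A $ i $ j) = 1)"

text \<open>Signed (finite, real valued) Borel measures on P(S), represented as set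
  functions that vanish off the Borel sets.  Since P(S) is a compact metric space,
  every such measure is Radon.\<close>
definition signed_measures :: "((real^'n::finite) set \<Rightarrow> real) set" where
  "signed_measures = {\<mu>. (\<forall>A. A \<notin> sets PS \<longrightarrow> \<mu> A = 0) \<and> \<mu> {} = 0 \<and>
     (\<forall>E::nat \<Rightarrow> (real^'n) set. range E \<subseteq> sets PS \<longrightarrow> disjoint_family E \<longrightarrow>
        (\<lambda>k. \<mu> (E k)) sums \<mu> (\<Union>k. E k))}"

definition tv_norm :: "((real^'n::finite) set \<Rightarrow> real) \<Rightarrow> real" where
  "tv_norm \<mu> = Sup {(\<Sum>i<k. \<bar>\<mu> (E i)\<bar>) | (k::nat) E. (\<forall>i<k. E i \<in> sets PS) \<and>
       disjoint_family_on E {..<k} \<and> (\<Union>i<k. E i) = prob_simplex}"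

definition jordan_pos :: "((real^'n::finite) set \<Rightarrow> real) \<Rightarrow> (real^'n) measure" where
  "jordan_pos \<mu> = measure_of prob_simplex (sets PS)
     (\<lambda>A. ennreal (SUP C\<in>{C\<in>sets PS. C \<subseteq> A}. \<mu> C))"

definition jordan_neg :: "((real^'n::finite) set \<Rightarrow> real) \<Rightarrow> (real^'n) measure" where
  "jordan_neg \<mu> = jordan_pos (\<lambda>A. - \<mu> A)"

definition signed_integral :: "((real^'n::finite) set \<Rightarrow> real) \<Rightarrow> (real^'n \<Rightarrow> real) \<Rightarrow> real" where
  "signed_integral \<mu> f = (\<integral>z. f z \<partial>jordan_pos \<mu>) - (\<integral>z. f z \<partial>jordan_neg \<mu>)"

text \<open>alpha_{i,y}(z) = (z T M^(i))_y  (z as a row vector).\<close>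
definition alpha :: "real^'n^'n \<Rightarrow> ('o \<Rightarrow> real^'m^'n) \<Rightarrow> 'o \<Rightarrow> 'm \<Rightarrow> real^'n \<Rightarrow> real" where
  "alpha T M i y z = (\<Sum>x\<in>UNIV. (\<Sum>j\<in>UNIV. z $ j * T $ j $ x) * M i $ x $ y)"

text \<open>r_{i,y}(z), the updated belief (a point of P(S)), written as
  sum_x c_x delta(x) with delta(x) the x-th unit vector.\<close>
definition rupd :: "real^'n::finite^'n \<Rightarrow> ('o \<Rightarrow> real^'m::finite^'n) \<Rightarrow> 'o \<Rightarrow> 'm \<Rightarrow> real^'n \<Rightarrow> real^'n" where
  "rupd T M i y z =
     (\<Sum>x\<in>UNIV. ((\<Sum>j\<in>UNIV. M i $ x $ y * T $ j $ x * z $ j) / alpha T M i y z) *\<^sub>R axis x 1)"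

text \<open>The transition function F on signed measures:
  F(mu)(B) = sum_i sum_y int_{A_i} alpha_{i,y}(z) delta_{r_{i,y}(z)}(B) dmu(z),
  terms with alpha = 0 contributing zero; A_i = g^{-1}{i}.\<close>
definition transF :: "real^'n::finite^'n \<Rightarrow> ('o::finite \<Rightarrow> real^'m::finite^'n) \<Rightarrow> (real^'n \<Rightarrow> 'o)
     \<Rightarrow> ((real^'n) set \<Rightarrow> real) \<Rightarrow> ((real^'n) set \<Rightarrow> real)" where
  "transF T M g \<mu> B = (if B \<in> sets PS then
     (\<Sum>i\<in>UNIV. \<Sum>y\<in>UNIV. signed_integral \<mu>
        (\<lambda>z. if g z = i \<and> alpha T M i y z > 0
             then alpha T M i y z * indicator B (rupd T M i y z) else 0))
     else 0)"

end

theory Submission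
  imports Defs
begin

text \<open>
  \<open>F\<close> integrates the Markov kernel
  \<open>K B z = \<Sum>\<^sub>i\<^sub>,\<^sub>y [z \<in> A\<^sub>i] \<alpha>\<^sub>i\<^sub>,\<^sub>y(z) \<delta>\<^bsub>r\<^sub>i\<^sub>,\<^sub>y(z)\<^esub>(B)\<close> against \<open>\<mu>\<close>, so it suffices to study
  \<open>\<mu> \<mapsto> (B \<mapsto> \<integral> K B d\<mu>)\<close> for an arbitrary Markov kernel \<open>K\<close> on \<open>P(S)\<close>.
  A signed measure is bounded, so its positive variation \<open>\<mu>\<^sup>+(A) = sup {\<mu> C | C \<subseteq> A}\<close> is a finite
  measure, \<open>\<mu> = \<mu>\<^sup>+ - \<mu>\<^sup>-\<close>, and \<open>\<parallel>\<mu>\<parallel> = \<mu>\<^sup>+(P(S)) + \<mu>\<^sup>-(P(S))\<close>.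
  Integration of bounded measurable functions is linear in \<open>\<mu>\<close> (by induction over nonnegative
  measurable functions), which gives linearity of \<open>F\<close>; countable additivity of \<open>F \<mu>\<close> follows by
  dominated convergence.  For a partition \<open>E\<^sub>1, \<dots>, E\<^sub>k\<close> of \<open>P(S)\<close>,
  \<open>\<Sum>\<^sub>l \<bar>F \<mu> (E\<^sub>l)\<bar> \<le> \<integral> \<Sum>\<^sub>l K E\<^sub>l d(\<mu>\<^sup>+ + \<mu>\<^sup>-) = \<integral> K P(S) d(\<mu>\<^sup>+ + \<mu>\<^sup>-) = \<parallel>\<mu>\<parallel>\<close>, so \<open>\<parallel>F\<parallel> \<le> 1\<close>.
  Since \<open>F\<close> preserves total mass, a point mass \<open>\<delta>\<close> satisfies \<open>1 = \<bar>F \<delta> (P(S))\<bar> \<le> \<parallel>F \<delta>\<parallel> \<le> 1\<close>,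
  so the norm is attained.
\<close>

section \<open>Signed measures on the simplex\<close>

lemma space_PS: "space PS = prob_simplex"
  by (simp add: PS_def space_restrict_space)

lemma sets_PS_subset: "A \<in> sets PS \<Longrightarrow> A \<subseteq> prob_simplex"
  using sets.sets_into_space space_PS by blast

lemma prob_simplex_in_sets_PS: "prob_simplex \<in> sets PS"
  using sets.top space_PS by metis

lemma axis_in_prob_simplex: "axis i 1 \<in> prob_simplex"
  by (simp add: prob_simplex_def axis_def)

lemma signed_measures_empty: "\<mu> \<in> signed_measures \<Longrightarrow> \<mu> {} = 0"
  by (simp add: signed_measures_def)

lemma signed_measures_uminus: "\<mu> \<in> signed_measures \<Longrightarrow> (\<lambda>A. - \<mu> A) \<in> signed_measures"
  unfolding signed_measures_def by (auto intro: sums_minus)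

lemma signed_measures_lincomb:
  "\<mu> \<in> signed_measures \<Longrightarrow> \<nu> \<in> signed_measures \<Longrightarrow> (\<lambda>A. a * \<mu> A + b * \<nu> A) \<in> signed_measures"
  unfolding signed_measures_def by (auto intro!: sums_add sums_mult)

lemma finite_measure_in_signed_measures:
  fixes N :: "(real^'n::finite) measure"
  assumes "finite_measure N" "sets N = sets PS"
  shows "measure N \<in> signed_measures"
  unfolding signed_measures_def
proof (intro CollectI conjI allI impI)
  show "measure N A = 0" if "A \<notin> sets PS" for A
    using that assms(2) by (simp add: measure_notin_sets)
  show "measure N {} = 0"
    by simp
  show "(\<lambda>k. measure N (E k)) sums measure N (\<Union>k. E k)"
    if "range E \<subseteq> sets PS" "disjoint_family E" for E :: "nat \<Rightarrow> (real^'n) set"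
    using finite_measure.finite_measure_UNION[OF assms(1)] that assms(2) by simp
qed

lemma signed_measure_sums:
  "\<mu> \<in> signed_measures \<Longrightarrow> range E \<subseteq> sets PS \<Longrightarrow> disjoint_family E \<Longrightarrow>
    (\<lambda>k. \<mu> (E k)) sums \<mu> (\<Union>k. E k)"
  by (simp add: signed_measures_def)

lemma signed_measure_Un:
  assumes "\<mu> \<in> signed_measures" "A \<in> sets PS" "B \<in> sets PS" "A \<inter> B = {}"
  shows "\<mu> (A \<union> B) = \<mu> A + \<mu> B"
proof -
  define E where "E k = (if k = (0::nat) then A else if k = 1 then B else {})" for k
  have "range E \<subseteq> sets PS" "disjoint_family E"
    using assms(2-4) by (auto simp: E_def disjoint_family_on_def)
  then have "(\<lambda>k. \<mu> (E k)) sums \<mu> (\<Union>k. E k)"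
    by (rule signed_measure_sums[OF assms(1)])
  moreover have "(\<Union>k. E k) = A \<union> B"
    by (auto simp: E_def split: if_splits)
  moreover have "(\<lambda>k. \<mu> (E k)) sums (\<Sum>k\<in>{0,1}. \<mu> (E k))"
    by (rule sums_finite) (auto simp: E_def signed_measures_empty[OF assms(1)])
  ultimately show ?thesis
    using sums_unique2 by (fastforce simp: E_def)
qed

lemma signed_measure_Diff:
  assumes "\<mu> \<in> signed_measures" "A \<in> sets PS" "C \<in> sets PS" "C \<subseteq> A"
  shows "\<mu> (A - C) = \<mu> A - \<mu> C"
proof -
  have "\<mu> ((A - C) \<union> C) = \<mu> (A - C) + \<mu> C"
    using assms by (intro signed_measure_Un) auto
  moreover have "(A - C) \<union> C = A"
    using assms(4) by blast
  ultimately show ?thesis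
    by simp
qed

definition unbounded_within :: "((real^'n::finite) set \<Rightarrow> real) \<Rightarrow> (real^'n) set \<Rightarrow> bool" where
  "unbounded_within \<mu> A \<longleftrightarrow> (\<forall>B. \<exists>C\<in>sets PS. C \<subseteq> A \<and> B < \<bar>\<mu> C\<bar>)"

text \<open>If both halves of a split of \<open>A\<close> were bounded, \<open>A\<close> would be bounded.\<close>
lemma unbounded_within_split:
  assumes \<mu>: "\<mu> \<in> signed_measures" and A: "A \<in> sets PS" "unbounded_within \<mu> A"
  shows "\<exists>C\<in>sets PS. C \<subseteq> A \<and> 1 \<le> \<bar>\<mu> C\<bar> \<and> unbounded_within \<mu> (A - C)"
proof -
  obtain C where C: "C \<in> sets PS" "C \<subseteq> A" "\<bar>\<mu> A\<bar> + 1 < \<bar>\<mu> C\<bar>"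
    using A(2) unfolding unbounded_within_def by blast
  have \<mu>AC: "\<mu> (A - C) = \<mu> A - \<mu> C"
    using signed_measure_Diff[OF \<mu> A(1) C(1,2)] .
  show ?thesis
  proof (cases "unbounded_within \<mu> (A - C)")
    case True
    then show ?thesis using C by auto
  next
    case False
    then obtain B' where B': "\<And>D. D \<in> sets PS \<Longrightarrow> D \<subseteq> A - C \<Longrightarrow> \<bar>\<mu> D\<bar> \<le> B'"
      unfolding unbounded_within_def by (meson not_le)
    have "unbounded_within \<mu> C"
      unfolding unbounded_within_def
    proof
      fix B
      obtain D where D: "D \<in> sets PS" "D \<subseteq> A" "B + B' < \<bar>\<mu> D\<bar>"
        using A(2) unfolding unbounded_within_def by blast
      have "\<mu> D = \<mu> (D \<inter> C) + \<mu> (D - C)"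
        using signed_measure_Un[OF \<mu>, of "D \<inter> C" "D - C"] D C Int_Diff_Un[of D C] by auto
      moreover have "\<bar>\<mu> (D - C)\<bar> \<le> B'"
        using B'[of "D - C"] D C by auto
      ultimately show "\<exists>C'\<in>sets PS. C' \<subseteq> C \<and> B < \<bar>\<mu> C'\<bar>"
        using D C by (intro bexI[of _ "D \<inter> C"]) auto
    qed
    moreover have "A - (A - C) = C"
      using C by auto
    moreover have "1 \<le> \<bar>\<mu> (A - C)\<bar>"
      using \<mu>AC C(3) by linarith
    moreover have "A - C \<in> sets PS"
      using A(1) C(1) by blast
    ultimately show ?thesis
      by (metis Diff_subset)
  qed
qed

lemma signed_measure_disjoint_tendsto_0:
  assumes "\<mu> \<in> signed_measures" "range D \<subseteq> sets PS" "disjoint_family D"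
  shows "(\<lambda>k. \<mu> (D k)) \<longlonglongrightarrow> 0"
  using signed_measure_sums[OF assms] by (intro summable_LIMSEQ_zero sums_summable)

text \<open>Split pieces of mass at least 1 off an unbounded set, keeping the remainder unbounded.\<close>
lemma unbounded_within_disjoint_pieces:
  fixes \<mu> :: "(real^'n::finite) set \<Rightarrow> real"
  assumes \<mu>: "\<mu> \<in> signed_measures" and unb: "unbounded_within \<mu> prob_simplex"
  obtains D :: "nat \<Rightarrow> (real^'n) set" where "range D \<subseteq> sets PS" "disjoint_family D" "\<And>k. 1 \<le> \<bar>\<mu> (D k)\<bar>"
proof -
  define piece where
    "piece A = (SOME C. C \<in> sets PS \<and> C \<subseteq> A \<and> 1 \<le> \<bar>\<mu> C\<bar> \<and> unbounded_within \<mu> (A - C))" for A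
  have piece: "piece A \<in> sets PS \<and> piece A \<subseteq> A \<and> 1 \<le> \<bar>\<mu> (piece A)\<bar> \<and> unbounded_within \<mu> (A - piece A)"
    if "A \<in> sets PS" "unbounded_within \<mu> A" for A
    unfolding piece_def by (rule someI_ex) (use unbounded_within_split[OF \<mu> that] in blast)
  define R where "R k = ((\<lambda>A. A - piece A) ^^ k) prob_simplex" for k
  have R: "R k \<in> sets PS \<and> unbounded_within \<mu> (R k)" for k
  proof (induction k)
    case 0
    then show ?case
      using unb prob_simplex_in_sets_PS by (simp add: R_def)
  next
    case (Suc k)
    then show ?case
      using piece[of "R k"] by (auto simp: R_def)
  qed
  define D where "D k = piece (R k)" for k
  have D: "D k \<in> sets PS" "D k \<subseteq> R k" "1 \<le> \<bar>\<mu> (D k)\<bar>" for k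
    using piece[of "R k"] R[of k] by (auto simp: D_def)
  have R_Suc: "R (Suc k) = R k - D k" for k
    by (simp add: R_def D_def)
  have "D m \<subseteq> R (Suc k)" if "k < m" for k m
  proof -
    have "R m \<subseteq> R (Suc k)"
      by (rule lift_Suc_antimono_le[of R]) (use R_Suc that in auto)
    then show ?thesis
      using D(2)[of m] by blast
  qed
  then have "D k \<inter> D m = {}" if "k < m" for k m
    using that unfolding R_Suc by blast
  then have "disjoint_family D"
    unfolding disjoint_family_on_def by (metis inf_commute linorder_neqE_nat)
  with D show thesis
    by (intro that[of D]) auto
qed

lemma signed_measure_bounded:
  fixes \<mu> :: "(real^'n::finite) set \<Rightarrow> real"
  assumes \<mu>: "\<mu> \<in> signed_measures"
  obtains B where "\<And>C. C \<in> sets PS \<Longrightarrow> \<bar>\<mu> C\<bar> \<le> B"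
proof -
  have "\<not> unbounded_within \<mu> prob_simplex"
  proof
    assume "unbounded_within \<mu> prob_simplex"
    then obtain D :: "nat \<Rightarrow> (real^'n) set" where D: "range D \<subseteq> sets PS" "disjoint_family D" "\<And>k. 1 \<le> \<bar>\<mu> (D k)\<bar>"
      using unbounded_within_disjoint_pieces[OF \<mu>] by blast
    then have "(\<lambda>k. \<bar>\<mu> (D k)\<bar>) \<longlonglongrightarrow> 0"
      by (intro tendsto_rabs_zero signed_measure_disjoint_tendsto_0[OF \<mu>])
    then show False
      using D(3) LIMSEQ_le_const[of "\<lambda>k. \<bar>\<mu> (D k)\<bar>" 0 1] by auto
  qed
  then show thesis
    using that sets_PS_subset unfolding unbounded_within_def by (meson not_le)
qed

section \<open>Jordan decomposition and total variation\<close>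

definition positive_variation :: "((real^'n::finite) set \<Rightarrow> real) \<Rightarrow> (real^'n) set \<Rightarrow> real" where
  "positive_variation \<mu> A = (SUP C\<in>{C\<in>sets PS. C \<subseteq> A}. \<mu> C)"

lemma positive_variation_upper:
  assumes \<mu>: "\<mu> \<in> signed_measures" and "C \<in> sets PS" "C \<subseteq> A"
  shows "\<mu> C \<le> positive_variation \<mu> A"
proof -
  obtain B where "\<And>C. C \<in> sets PS \<Longrightarrow> \<bar>\<mu> C\<bar> \<le> B"
    using signed_measure_bounded[OF \<mu>] by blast
  then have "bdd_above (\<mu> ` {C\<in>sets PS. C \<subseteq> A})"
    by (intro bdd_aboveI2[of _ _ B]) (auto dest: abs_le_D1)
  then show ?thesis
    unfolding positive_variation_def using assms(2,3) by (intro cSUP_upper) auto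
qed

lemma positive_variation_least:
  "(\<And>C. C \<in> sets PS \<Longrightarrow> C \<subseteq> A \<Longrightarrow> \<mu> C \<le> x) \<Longrightarrow> positive_variation \<mu> A \<le> x"
  unfolding positive_variation_def by (rule cSUP_least) auto

lemma positive_variation_nonneg: "\<mu> \<in> signed_measures \<Longrightarrow> 0 \<le> positive_variation \<mu> A"
  using positive_variation_upper[of \<mu> "{}" A] by (simp add: signed_measures_empty)

lemma positive_variation_empty: "\<mu> \<in> signed_measures \<Longrightarrow> positive_variation \<mu> {} = 0"
  using positive_variation_least[of "{}" \<mu> 0] positive_variation_nonneg[of \<mu> "{}"]
  by (simp add: signed_measures_empty)

lemma positive_variation_mono:
  "\<mu> \<in> signed_measures \<Longrightarrow> A \<subseteq> B \<Longrightarrow> positive_variation \<mu> A \<le> positive_variation \<mu> B"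
  by (intro positive_variation_least positive_variation_upper) auto

lemma positive_variation_superadditive:
  assumes \<mu>: "\<mu> \<in> signed_measures" and X: "X \<in> sets PS" and Y: "Y \<in> sets PS"
    and disj: "X \<inter> Y = {}"
  shows "positive_variation \<mu> X + positive_variation \<mu> Y \<le> positive_variation \<mu> (X \<union> Y)"
proof -
  have "positive_variation \<mu> X \<le> positive_variation \<mu> (X \<union> Y) - \<mu> D"
    if D: "D \<in> sets PS" "D \<subseteq> Y" for D
  proof (rule positive_variation_least)
    fix C assume C: "C \<in> sets PS" "C \<subseteq> X"
    have "\<mu> (C \<union> D) = \<mu> C + \<mu> D"
      using signed_measure_Un[OF \<mu> C(1) D(1)] C D disj by auto
    moreover have "\<mu> (C \<union> D) \<le> positive_variation \<mu> (X \<union> Y)"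
      using C D by (intro positive_variation_upper[OF \<mu>]) auto
    ultimately show "\<mu> C \<le> positive_variation \<mu> (X \<union> Y) - \<mu> D"
      by simp
  qed
  then have "positive_variation \<mu> Y \<le> positive_variation \<mu> (X \<union> Y) - positive_variation \<mu> X"
    by (intro positive_variation_least) (auto simp: algebra_simps)
  then show ?thesis
    by simp
qed

lemma positive_variation_sum_le:
  fixes E :: "nat \<Rightarrow> (real^'n::finite) set"
  assumes \<mu>: "\<mu> \<in> signed_measures" and E: "\<And>i. E i \<in> sets PS" and disj: "disjoint_family E"
  shows "(\<Sum>i<N. positive_variation \<mu> (E i)) \<le> positive_variation \<mu> (\<Union>i<N. E i)"
proof (induction N)
  case 0
  then show ?case
    using positive_variation_empty[OF \<mu>] by simp
next
  case (Suc N)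
  have "E i \<inter> E N = {}" if "i < N" for i
    using disj that unfolding disjoint_family_on_def by simp
  then have "(\<Union>i<N. E i) \<inter> E N = {}"
    by blast
  then have "positive_variation \<mu> (\<Union>i<N. E i) + positive_variation \<mu> (E N)
      \<le> positive_variation \<mu> ((\<Union>i<N. E i) \<union> E N)"
    using E by (intro positive_variation_superadditive[OF \<mu>]) auto
  then show ?case
    using Suc by (simp add: lessThan_Suc Un_commute)
qed

lemma positive_variation_sums:
  assumes \<mu>: "\<mu> \<in> signed_measures" and E: "\<And>i. E i \<in> sets PS" and disj: "disjoint_family E"
  shows "(\<lambda>i. positive_variation \<mu> (E i)) sums positive_variation \<mu> (\<Union>i. E i)"
proof -
  have partial: "(\<Sum>i<N. positive_variation \<mu> (E i)) \<le> positive_variation \<mu> (\<Union>i. E i)" for N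
    by (rule order_trans[OF positive_variation_sum_le[OF assms] positive_variation_mono[OF \<mu>]]) blast
  have summable: "summable (\<lambda>i. positive_variation \<mu> (E i))"
    using partial positive_variation_nonneg[OF \<mu>] by (intro summableI_nonneg_bounded) auto
  have "positive_variation \<mu> (\<Union>i. E i) \<le> (\<Sum>i. positive_variation \<mu> (E i))"
  proof (rule positive_variation_least)
    fix C assume C: "C \<in> sets PS" "C \<subseteq> (\<Union>i. E i)"
    have "range (\<lambda>i. C \<inter> E i) \<subseteq> sets PS"
      using C E by auto
    moreover have "disjoint_family (\<lambda>i. C \<inter> E i)"
      using disj unfolding disjoint_family_on_def by blast
    moreover have "(\<Union>i. C \<inter> E i) = C"
      using C by auto
    ultimately have parts: "(\<lambda>i. \<mu> (C \<inter> E i)) sums \<mu> C"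
      using signed_measure_sums[OF \<mu>] by metis
    have "\<mu> C = (\<Sum>i. \<mu> (C \<inter> E i))"
      using sums_unique[OF parts] .
    also have "\<dots> \<le> (\<Sum>i. positive_variation \<mu> (E i))"
      using C E sums_summable[OF parts] summable
      by (intro suminf_le positive_variation_upper[OF \<mu>]) auto
    finally show "\<mu> C \<le> (\<Sum>i. positive_variation \<mu> (E i))" .
  qed
  moreover have "(\<Sum>i. positive_variation \<mu> (E i)) \<le> positive_variation \<mu> (\<Union>i. E i)"
    using partial summable by (intro suminf_le_const) auto
  ultimately have "positive_variation \<mu> (\<Union>i. E i) = (\<Sum>i. positive_variation \<mu> (E i))"
    by (rule antisym)
  with summable_sums[OF summable] show ?thesis
    by simp
qed

lemma signed_measure_eq_variation_diff:
  assumes \<mu>: "\<mu> \<in> signed_measures" and A: "A \<in> sets PS"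
  shows "\<mu> A = positive_variation \<mu> A - positive_variation (\<lambda>A. - \<mu> A) A"
proof -
  have "\<mu> C = \<mu> A - \<mu> (A - C)" if "C \<in> sets PS" "C \<subseteq> A" for C
    using signed_measure_Diff[OF \<mu> A that] by simp
  moreover have "\<mu> (A - C) \<le> positive_variation \<mu> A" "- \<mu> (A - C) \<le> positive_variation (\<lambda>A. - \<mu> A) A"
    if "C \<in> sets PS" for C
    using that A positive_variation_upper[OF \<mu>] positive_variation_upper[OF signed_measures_uminus[OF \<mu>]]
    by auto
  ultimately have "positive_variation \<mu> A \<le> \<mu> A + positive_variation (\<lambda>A. - \<mu> A) A"
    "positive_variation (\<lambda>A. - \<mu> A) A \<le> positive_variation \<mu> A - \<mu> A"
    by (intro positive_variation_least; force)+
  then show ?thesis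
    by simp
qed

lemma sigma_algebra_PS: "sigma_algebra prob_simplex (sets PS)"
  using sets.sigma_algebra_axioms[of PS] by (simp add: space_PS)

lemma sets_jordan_pos [simp]:
  fixes \<mu> :: "(real^'n::finite) set \<Rightarrow> real"
  shows "sets (jordan_pos \<mu>) = sets PS"
proof -
  have "sets (PS :: (real^'n) measure) \<subseteq> Pow prob_simplex"
    using sets_PS_subset by blast
  then show ?thesis
    by (simp add: jordan_pos_def sigma_algebra.sigma_sets_eq[OF sigma_algebra_PS])
qed

lemma space_jordan_pos [simp]: "space (jordan_pos \<mu>) = prob_simplex"
  using sets_eq_imp_space_eq[OF sets_jordan_pos] by (simp add: space_PS)

lemma emeasure_jordan_pos:
  fixes \<mu> :: "(real^'n::finite) set \<Rightarrow> real"
  assumes \<mu>: "\<mu> \<in> signed_measures" and A: "A \<in> sets PS"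
  shows "emeasure (jordan_pos \<mu>) A = ennreal (positive_variation \<mu> A)"
  unfolding jordan_pos_def positive_variation_def[symmetric]
proof (rule emeasure_measure_of_sigma)
  show "sigma_algebra prob_simplex (sets PS)"
    by (rule sigma_algebra_PS)
  show "positive (sets PS) (\<lambda>A. ennreal (positive_variation \<mu> A))"
    unfolding positive_def using positive_variation_empty[OF \<mu>] by simp
  show "countably_additive (sets PS) (\<lambda>A. ennreal (positive_variation \<mu> A))"
    unfolding countably_additive_def
  proof (intro allI impI)
    fix E :: "nat \<Rightarrow> (real^'n) set"
    assume "range E \<subseteq> sets PS" "disjoint_family E"
    then have sums: "(\<lambda>i. positive_variation \<mu> (E i)) sums positive_variation \<mu> (\<Union>i. E i)"
      by (intro positive_variation_sums[OF \<mu>]) auto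
    show "(\<Sum>i. ennreal (positive_variation \<mu> (E i))) = ennreal (positive_variation \<mu> (\<Union>(range E)))"
      using suminf_ennreal2[OF positive_variation_nonneg[OF \<mu>] sums_summable[OF sums]] sums_unique[OF sums]
      by simp
  qed
qed (use A in auto)

lemma finite_measure_jordan_pos: "\<mu> \<in> signed_measures \<Longrightarrow> finite_measure (jordan_pos \<mu>)"
  by (rule finite_measureI) (simp add: emeasure_jordan_pos prob_simplex_in_sets_PS)

lemma measure_jordan_pos:
  "\<mu> \<in> signed_measures \<Longrightarrow> A \<in> sets PS \<Longrightarrow> measure (jordan_pos \<mu>) A = positive_variation \<mu> A"
  by (simp add: measure_def emeasure_jordan_pos positive_variation_nonneg)

lemma tv_norm_le:
  assumes "\<And>(k::nat) E. \<forall>i<k. E i \<in> sets PS \<Longrightarrow> disjoint_family_on E {..<k} \<Longrightarrow>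
      (\<Union>i<k. E i) = prob_simplex \<Longrightarrow> (\<Sum>i<k. \<bar>\<mu> (E i)\<bar>) \<le> X"
  shows "tv_norm \<mu> \<le> X"
  unfolding tv_norm_def
proof (rule cSup_least)
  have "(\<Sum>i<Suc 0. \<bar>\<mu> ((\<lambda>_. prob_simplex) i)\<bar>) \<in> {(\<Sum>i<k. \<bar>\<mu> (E i)\<bar>) | (k::nat) E.
      (\<forall>i<k. E i \<in> sets PS) \<and> disjoint_family_on E {..<k} \<and> (\<Union>i<k. E i) = prob_simplex}"
    using prob_simplex_in_sets_PS by (intro CollectI exI) (auto simp: disjoint_family_on_def)
  then show "{(\<Sum>i<k. \<bar>\<mu> (E i)\<bar>) | (k::nat) E. (\<forall>i<k. E i \<in> sets PS) \<and>
      disjoint_family_on E {..<k} \<and> (\<Union>i<k. E i) = prob_simplex} \<noteq> {}"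
    by blast
qed (use assms in blast)

lemma abs_le_total_variation:
  assumes \<mu>: "\<mu> \<in> signed_measures" and A: "A \<in> sets PS"
  shows "\<bar>\<mu> A\<bar> \<le> positive_variation \<mu> A + positive_variation (\<lambda>A. - \<mu> A) A"
  using signed_measure_eq_variation_diff[OF \<mu> A] positive_variation_nonneg[OF \<mu>, of A]
    positive_variation_nonneg[OF signed_measures_uminus[OF \<mu>], of A]
  unfolding abs_le_iff by linarith

lemma partition_sum_le_variation:
  fixes k :: nat
  assumes \<mu>: "\<mu> \<in> signed_measures" and E: "\<forall>i<k. E i \<in> sets PS"
    and disj: "disjoint_family_on E {..<k}" and cover: "(\<Union>i<k. E i) = prob_simplex"
  shows "(\<Sum>i<k. \<bar>\<mu> (E i)\<bar>)
    \<le> positive_variation \<mu> prob_simplex + positive_variation (\<lambda>A. - \<mu> A) prob_simplex"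
proof -
  have additive: "(\<Sum>i<k. positive_variation \<rho> (E i)) = positive_variation \<rho> prob_simplex"
    if \<rho>: "\<rho> \<in> signed_measures" for \<rho>
  proof -
    have "measure (jordan_pos \<rho>) (\<Union>i\<in>{..<k}. E i) = (\<Sum>i\<in>{..<k}. measure (jordan_pos \<rho>) (E i))"
      using E disj finite_measure.emeasure_finite[OF finite_measure_jordan_pos[OF \<rho>]]
      by (intro measure_finite_Union) auto
    then show ?thesis
      using E cover by (simp add: measure_jordan_pos[OF \<rho>] prob_simplex_in_sets_PS)
  qed
  have "(\<Sum>i<k. \<bar>\<mu> (E i)\<bar>)
      \<le> (\<Sum>i<k. positive_variation \<mu> (E i) + positive_variation (\<lambda>A. - \<mu> A) (E i))"
    using E by (intro sum_mono abs_le_total_variation[OF \<mu>]) auto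
  also have "\<dots> = positive_variation \<mu> prob_simplex + positive_variation (\<lambda>A. - \<mu> A) prob_simplex"
    using additive[OF \<mu>] additive[OF signed_measures_uminus[OF \<mu>]] by (simp add: sum.distrib)
  finally show ?thesis .
qed

text \<open>The lower bound uses the partition of the simplex into \<open>C - D\<close>, \<open>D - C\<close> and the rest.\<close>
lemma tv_norm_eq_variation:
  fixes \<mu> :: "(real^'n::finite) set \<Rightarrow> real"
  assumes \<mu>: "\<mu> \<in> signed_measures"
  shows "tv_norm \<mu> = positive_variation \<mu> prob_simplex + positive_variation (\<lambda>A. - \<mu> A) prob_simplex"
proof (rule antisym)
  show "tv_norm \<mu> \<le> positive_variation \<mu> prob_simplex + positive_variation (\<lambda>A. - \<mu> A) prob_simplex"
    by (rule tv_norm_le) (rule partition_sum_le_variation[OF \<mu>])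
  have bdd: "bdd_above {(\<Sum>i<k. \<bar>\<mu> (E i)\<bar>) | (k::nat) E. (\<forall>i<k. E i \<in> sets PS) \<and>
      disjoint_family_on E {..<k} \<and> (\<Union>i<k. E i) = prob_simplex}"
    using partition_sum_le_variation[OF \<mu>] by (intro bdd_aboveI) blast
  have diff_le: "\<mu> C - \<mu> D \<le> tv_norm \<mu>" if C: "C \<in> sets PS" and D: "D \<in> sets PS" for C D
  proof -
    define E where "E i = (if i = (0::nat) then C - D else if i = 1 then D - C
       else prob_simplex - (C - D) - (D - C))" for i
    have "\<forall>i<3. E i \<in> sets PS"
      using C D prob_simplex_in_sets_PS by (auto simp: E_def)
    moreover have "disjoint_family_on E {..<3}"
      by (auto simp: disjoint_family_on_def E_def)
    moreover have "(\<Union>i<3. E i) = prob_simplex"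
      using C D sets_PS_subset by (auto simp: E_def eval_nat_numeral lessThan_Suc)
    ultimately have "(\<Sum>i<3. \<bar>\<mu> (E i)\<bar>) \<le> tv_norm \<mu>"
      unfolding tv_norm_def by (intro cSup_upper[OF _ bdd]) blast
    moreover have "\<mu> ((C - D) \<union> (C \<inter> D)) = \<mu> (C - D) + \<mu> (C \<inter> D)"
      "\<mu> ((D - C) \<union> (C \<inter> D)) = \<mu> (D - C) + \<mu> (C \<inter> D)"
      using C D by (intro signed_measure_Un[OF \<mu>]; auto)+
    moreover have "(C - D) \<union> (C \<inter> D) = C" "(D - C) \<union> (C \<inter> D) = D"
      by auto
    ultimately show ?thesis
      by (simp add: eval_nat_numeral lessThan_Suc E_def)
  qed
  have "positive_variation \<mu> prob_simplex \<le> tv_norm \<mu> - (- \<mu> D)" if "D \<in> sets PS" for D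
  proof (rule positive_variation_least)
    fix C :: "(real^'n) set"
    assume "C \<in> sets PS"
    then show "\<mu> C \<le> tv_norm \<mu> - (- \<mu> D)"
      using diff_le[of C D] that by simp
  qed
  then have "positive_variation (\<lambda>A. - \<mu> A) prob_simplex \<le> tv_norm \<mu> - positive_variation \<mu> prob_simplex"
    by (intro positive_variation_least) (auto simp: algebra_simps)
  then show "positive_variation \<mu> prob_simplex + positive_variation (\<lambda>A. - \<mu> A) prob_simplex \<le> tv_norm \<mu>"
    by simp
qed

lemma abs_le_tv_norm:
  assumes \<mu>: "\<mu> \<in> signed_measures" and A: "A \<in> sets PS"
  shows "\<bar>\<mu> A\<bar> \<le> tv_norm \<mu>"
  using abs_le_total_variation[OF \<mu> A] tv_norm_eq_variation[OF \<mu>]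
    positive_variation_mono[OF \<mu> sets_PS_subset[OF A]]
    positive_variation_mono[OF signed_measures_uminus[OF \<mu>] sets_PS_subset[OF A]]
  by linarith

lemma tv_norm_measure:
  fixes N :: "(real^'n::finite) measure"
  assumes N: "finite_measure N" "sets N = sets PS"
  shows "tv_norm (measure N) = measure N prob_simplex"
proof -
  have "positive_variation (measure N) prob_simplex \<le> measure N prob_simplex"
    using N prob_simplex_in_sets_PS
    by (intro positive_variation_least finite_measure.finite_measure_mono) auto
  moreover have "positive_variation (\<lambda>A. - measure N A) prob_simplex = 0"
    using positive_variation_nonneg[OF signed_measures_uminus[OF finite_measure_in_signed_measures[OF N]]]
    by (intro antisym positive_variation_least) auto
  moreover have "measure N prob_simplex \<le> positive_variation (measure N) prob_simplex"
    by (intro positive_variation_upper finite_measure_in_signed_measures N prob_simplex_in_sets_PS) simp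
  ultimately show ?thesis
    unfolding tv_norm_eq_variation[OF finite_measure_in_signed_measures[OF N]] by simp
qed

section \<open>Integration against signed measures\<close>

lemma measurable_jordan_pos_iff [simp]:
  fixes \<mu> :: "(real^'n::finite) set \<Rightarrow> real"
  shows "f \<in> borel_measurable (jordan_pos \<mu>) \<longleftrightarrow> f \<in> borel_measurable PS"
  by (simp add: measurable_cong_sets[OF sets_jordan_pos refl])

lemma integrable_jordan_pos:
  fixes K :: real
  assumes \<mu>: "\<mu> \<in> signed_measures" and f: "f \<in> borel_measurable PS"
    and bound: "\<And>z. z \<in> prob_simplex \<Longrightarrow> \<bar>f z\<bar> \<le> K"
  shows "integrable (jordan_pos \<mu>) f"
  using f bound
  by (intro finite_measure.integrable_const_bound[OF finite_measure_jordan_pos[OF \<mu>], where B=K] AE_I2)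
    auto

lemma signed_integral_cong:
  assumes "\<And>z. z \<in> prob_simplex \<Longrightarrow> f z = g z"
  shows "signed_integral \<mu> f = signed_integral \<mu> g"
proof -
  have "integral\<^sup>L (jordan_pos \<rho>) f = integral\<^sup>L (jordan_pos \<rho>) g" for \<rho>
    using assms by (intro Bochner_Integration.integral_cong) auto
  then show ?thesis
    by (simp add: signed_integral_def jordan_neg_def)
qed

lemma signed_integral_indicator:
  assumes \<mu>: "\<mu> \<in> signed_measures" and A: "A \<in> sets PS"
  shows "signed_integral \<mu> (indicator A) = \<mu> A"
  using A signed_measure_eq_variation_diff[OF \<mu> A] Int_absorb2[OF sets_PS_subset[OF A]]
  by (simp add: signed_integral_def jordan_neg_def measure_jordan_pos \<mu> signed_measures_uminus)

lemma signed_integral_cmult: "signed_integral \<mu> (\<lambda>z. c * f z) = c * signed_integral \<mu> f"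
  by (simp add: signed_integral_def right_diff_distrib)

lemma signed_integral_sum:
  fixes K :: real
  assumes \<mu>: "\<mu> \<in> signed_measures" and f: "\<And>i. i \<in> I \<Longrightarrow> f i \<in> borel_measurable PS"
    and bound: "\<And>i z. i \<in> I \<Longrightarrow> z \<in> prob_simplex \<Longrightarrow> \<bar>f i z\<bar> \<le> K"
  shows "signed_integral \<mu> (\<lambda>z. \<Sum>i\<in>I. f i z) = (\<Sum>i\<in>I. signed_integral \<mu> (f i))"
proof -
  have "integrable (jordan_pos \<rho>) (f i)" if "\<rho> \<in> signed_measures" "i \<in> I" for \<rho> i
    using integrable_jordan_pos[OF that(1) f bound] that(2) by blast
  then show ?thesis
    using \<mu> signed_measures_uminus[OF \<mu>]
    by (simp add: signed_integral_def jordan_neg_def Bochner_Integration.integral_sum sum_subtractf)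
qed

lemma signed_integral_add:
  fixes K :: real
  assumes \<mu>: "\<mu> \<in> signed_measures" and f: "f \<in> borel_measurable PS" "g \<in> borel_measurable PS"
    and bound: "\<And>z. z \<in> prob_simplex \<Longrightarrow> \<bar>f z\<bar> \<le> K" "\<And>z. z \<in> prob_simplex \<Longrightarrow> \<bar>g z\<bar> \<le> K"
  shows "signed_integral \<mu> (\<lambda>z. f z + g z) = signed_integral \<mu> f + signed_integral \<mu> g"
  using signed_integral_sum[OF \<mu>, of "{True, False}" "\<lambda>b. if b then f else g" K] f bound
  by simp

lemma signed_integral_tendsto:
  fixes K :: real
  assumes \<mu>: "\<mu> \<in> signed_measures"
    and f: "\<And>i. f i \<in> borel_measurable PS" "g \<in> borel_measurable PS"
    and bound: "\<And>i z. z \<in> prob_simplex \<Longrightarrow> \<bar>f i z\<bar> \<le> K"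
    and lim: "\<And>z. z \<in> prob_simplex \<Longrightarrow> (\<lambda>i. f i z) \<longlonglongrightarrow> g z"
  shows "(\<lambda>i. signed_integral \<mu> (f i)) \<longlonglongrightarrow> signed_integral \<mu> g"
proof -
  have "(\<lambda>i. integral\<^sup>L (jordan_pos \<rho>) (f i)) \<longlonglongrightarrow> integral\<^sup>L (jordan_pos \<rho>) g"
    if \<rho>: "\<rho> \<in> signed_measures" for \<rho>
    using f bound lim
    by (intro integral_dominated_convergence[where w="\<lambda>_. K"] AE_I2
        finite_measure.integrable_const[OF finite_measure_jordan_pos[OF \<rho>]]) auto
  from tendsto_diff[OF this[OF \<mu>] this[OF signed_measures_uminus[OF \<mu>]]] show ?thesis
    by (simp add: signed_integral_def jordan_neg_def)
qed

text \<open>The induction ranges over all nonnegative measurable functions, but only bounded ones are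
  integrable against \<open>\<mu>\<^sup>\<plusminus>\<close>, hence the quantified bound \<open>K\<close>.\<close>
lemma signed_integral_lincomb_eq_0_nonneg:
  fixes \<rho> :: "'i \<Rightarrow> (real^'n::finite) set \<Rightarrow> real"
  assumes \<rho>: "\<And>j. j \<in> I \<Longrightarrow> \<rho> j \<in> signed_measures"
    and rel: "\<And>A. A \<in> sets PS \<Longrightarrow> (\<Sum>j\<in>I. c j * \<rho> j A) = 0"
    and u: "u \<in> borel_measurable PS" "\<And>z. 0 \<le> u z"
  shows "\<forall>K. (\<forall>z\<in>prob_simplex. u z \<le> K) \<longrightarrow> (\<Sum>j\<in>I. c j * signed_integral (\<rho> j) u) = 0"
  using u
proof (induction rule: borel_measurable_induct_real)
  case (set A)
  then show ?case
    using rel[OF set] by (simp add: signed_integral_indicator \<rho> cong: sum.cong)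
next
  case (mult v a)
  show ?case
  proof (intro allI impI)
    fix K assume K: "\<forall>z\<in>prob_simplex. a * v z \<le> K"
    show "(\<Sum>j\<in>I. c j * signed_integral (\<rho> j) (\<lambda>z. a * v z)) = 0"
    proof (cases "a = 0")
      case False
      then have "\<forall>z\<in>prob_simplex. v z \<le> K / a"
        using K mult.hyps(1) by (simp add: field_simps)
      then have "(\<Sum>j\<in>I. c j * signed_integral (\<rho> j) v) = 0"
        using mult.IH by blast
      then show ?thesis
        by (simp add: signed_integral_cmult sum_distrib_left[symmetric] algebra_simps)
    qed (simp add: signed_integral_def)
  qed
next
  case (add v w)
  have nonneg: "0 \<le> v z" "0 \<le> w z" for z
    using add by blast+
  show ?case
  proof (intro allI impI)
    fix K assume K: "\<forall>z\<in>prob_simplex. w z + v z \<le> K"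
    have v_le: "v z \<le> K" and w_le: "w z \<le> K" if "z \<in> prob_simplex" for z
      using K nonneg[of z] that by fastforce+
    have "signed_integral (\<rho> j) (\<lambda>z. w z + v z) = signed_integral (\<rho> j) w + signed_integral (\<rho> j) v"
      if "j \<in> I" for j
      using add.hyps v_le w_le nonneg
      by (intro signed_integral_add[OF \<rho>[OF that], where K=K]) (auto simp: abs_le_iff)
    moreover have "(\<Sum>j\<in>I. c j * signed_integral (\<rho> j) v) = 0" "(\<Sum>j\<in>I. c j * signed_integral (\<rho> j) w) = 0"
      using add.IH v_le w_le by blast+
    ultimately show "(\<Sum>j\<in>I. c j * signed_integral (\<rho> j) (\<lambda>z. w z + v z)) = 0"
      by (simp add: distrib_left sum.distrib)
  qed
next
  case (seq U)
  show ?case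
  proof (intro allI impI)
    fix K assume K: "\<forall>z\<in>prob_simplex. u z \<le> K"
    have le_u: "U i z \<le> u z" if "z \<in> prob_simplex" for i z
    proof (rule incseq_le)
      show "incseq (\<lambda>i. U i z)"
        using seq.hyps(3) by (simp add: incseq_def le_fun_def)
      show "(\<lambda>i. U i z) \<longlonglongrightarrow> u z"
        using seq.hyps(4) that by (simp add: space_PS)
    qed
    have le_K: "U i z \<le> K" if "z \<in> prob_simplex" for i z
      using order_trans[OF le_u[OF that] bspec[OF K that]] .
    then have abs_le_K: "\<bar>U i z\<bar> \<le> K" if "z \<in> prob_simplex" for i z
      using seq.hyps(2)[of i z] that by simp
    have "(\<Sum>j\<in>I. c j * signed_integral (\<rho> j) (U i)) = 0" for i
      using seq.IH[of i] le_K by blast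
    moreover have "(\<lambda>i. \<Sum>j\<in>I. c j * signed_integral (\<rho> j) (U i))
        \<longlonglongrightarrow> (\<Sum>j\<in>I. c j * signed_integral (\<rho> j) u)"
    proof (intro tendsto_sum tendsto_mult_left)
      fix j assume "j \<in> I"
      show "(\<lambda>i. signed_integral (\<rho> j) (U i)) \<longlonglongrightarrow> signed_integral (\<rho> j) u"
        using seq.hyps(1,4) abs_le_K u(1)
        by (intro signed_integral_tendsto[OF \<rho>[OF \<open>j \<in> I\<close>], where K=K]) (auto simp: space_PS)
    qed
    ultimately show "(\<Sum>j\<in>I. c j * signed_integral (\<rho> j) u) = 0"
      by (simp add: LIMSEQ_const_iff)
  qed
qed

lemma signed_integral_lincomb_eq_0:
  fixes \<rho> :: "'i \<Rightarrow> (real^'n::finite) set \<Rightarrow> real" and K :: real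
  assumes \<rho>: "\<And>j. j \<in> I \<Longrightarrow> \<rho> j \<in> signed_measures"
    and rel: "\<And>A. A \<in> sets PS \<Longrightarrow> (\<Sum>j\<in>I. c j * \<rho> j A) = 0"
    and f: "f \<in> borel_measurable PS" and bound: "\<And>z. z \<in> prob_simplex \<Longrightarrow> \<bar>f z\<bar> \<le> K"
  shows "(\<Sum>j\<in>I. c j * signed_integral (\<rho> j) f) = 0"
proof -
  txt \<open>\<open>f\<close> is only bounded on the simplex, so the shift is cut off outside it.\<close>
  define u where "u z = indicator prob_simplex z * (f z + \<bar>K\<bar>)" for z
  have u_measurable: "u \<in> borel_measurable PS"
    unfolding u_def using f prob_simplex_in_sets_PS by measurable
  have u_nonneg: "0 \<le> u z" for z
    using bound[of z] by (auto simp: u_def abs_le_iff indicator_def)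
  have "u z \<le> 2 * \<bar>K\<bar>" if "z \<in> prob_simplex" for z
    using bound[OF that] abs_ge_self[of K] that by (simp add: u_def abs_le_iff)
  then have u_eq_0: "(\<Sum>j\<in>I. c j * signed_integral (\<rho> j) u) = 0"
    using signed_integral_lincomb_eq_0_nonneg[OF \<rho> rel u_measurable u_nonneg] by blast
  have shift: "signed_integral (\<rho> j) u = signed_integral (\<rho> j) f + \<bar>K\<bar> * \<rho> j prob_simplex"
    if "j \<in> I" for j
  proof -
    have "signed_integral (\<rho> j) u = signed_integral (\<rho> j) (\<lambda>z. f z + \<bar>K\<bar> * indicator prob_simplex z)"
      by (rule signed_integral_cong) (simp add: u_def)
    also have "\<dots> = signed_integral (\<rho> j) f + signed_integral (\<rho> j) (\<lambda>z. \<bar>K\<bar> * indicator prob_simplex z)"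
    proof (rule signed_integral_add[OF \<rho>[OF that] f, where K="\<bar>K\<bar>"])
      show "(\<lambda>z. \<bar>K\<bar> * indicator prob_simplex z) \<in> borel_measurable PS"
        using prob_simplex_in_sets_PS by measurable
      show "\<bar>f z\<bar> \<le> \<bar>K\<bar>" if "z \<in> prob_simplex" for z
        using bound[OF that] by linarith
      show "\<bar>\<bar>K\<bar> * indicator prob_simplex z\<bar> \<le> \<bar>K\<bar>" for z
        by (simp add: indicator_def)
    qed
    also have "\<dots> = signed_integral (\<rho> j) f + \<bar>K\<bar> * \<rho> j prob_simplex"
      by (simp add: signed_integral_cmult signed_integral_indicator \<rho>[OF that] prob_simplex_in_sets_PS)
    finally show ?thesis .
  qed
  then have "(\<Sum>j\<in>I. c j * signed_integral (\<rho> j) u)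
      = (\<Sum>j\<in>I. c j * signed_integral (\<rho> j) f + \<bar>K\<bar> * (c j * \<rho> j prob_simplex))"
    by (intro sum.cong) (simp_all add: algebra_simps)
  also have "\<dots> = (\<Sum>j\<in>I. c j * signed_integral (\<rho> j) f)"
    using rel[OF prob_simplex_in_sets_PS] by (simp add: sum.distrib sum_distrib_left[symmetric])
  finally show ?thesis
    using u_eq_0 by simp
qed

lemma signed_integral_linear:
  fixes K :: real
  assumes \<mu>: "\<mu> \<in> signed_measures" and \<nu>: "\<nu> \<in> signed_measures"
    and f: "f \<in> borel_measurable PS" and bound: "\<And>z. z \<in> prob_simplex \<Longrightarrow> \<bar>f z\<bar> \<le> K"
  shows "signed_integral (\<lambda>A. a * \<mu> A + b * \<nu> A) f = a * signed_integral \<mu> f + b * signed_integral \<nu> f"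
proof -
  define \<rho> where "\<rho> j = (if j = (0::nat) then (\<lambda>A. a * \<mu> A + b * \<nu> A) else if j = 1 then \<mu> else \<nu>)" for j
  define c where "c j = (if j = (0::nat) then 1 else if j = 1 then - a else - b)" for j
  have "(\<Sum>j\<in>{0, 1, 2}. c j * signed_integral (\<rho> j) f) = 0"
    using \<mu> \<nu> signed_measures_lincomb[OF \<mu> \<nu>] f bound
    by (intro signed_integral_lincomb_eq_0[where K=K]) (auto simp: \<rho>_def c_def)
  then show ?thesis
    by (simp add: \<rho>_def c_def)
qed

section \<open>Transition operators of Markov kernels\<close>

definition kernel_transform ::
    "((real^'n::finite) set \<Rightarrow> real^'n \<Rightarrow> real) \<Rightarrow> ((real^'n) set \<Rightarrow> real) \<Rightarrow> (real^'n) set \<Rightarrow> real" where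
  "kernel_transform K \<mu> B = (if B \<in> sets PS then signed_integral \<mu> (K B) else 0)"

locale simplex_markov_kernel =
  fixes K :: "(real^'n::finite) set \<Rightarrow> real^'n \<Rightarrow> real"
  assumes measurable_kernel: "B \<in> sets PS \<Longrightarrow> K B \<in> borel_measurable PS"
    and kernel_nonneg: "B \<in> sets PS \<Longrightarrow> 0 \<le> K B z"
    and kernel_space: "z \<in> prob_simplex \<Longrightarrow> K prob_simplex z = 1"
    and kernel_sums: "range E \<subseteq> sets PS \<Longrightarrow> disjoint_family E \<Longrightarrow> (\<lambda>l. K (E l) z) sums K (\<Union>l. E l) z"
begin

lemma kernel_empty: "K {} z = 0"
proof -
  have "(\<lambda>l. K {} z) sums K {} z"
    using kernel_sums[of "\<lambda>_. {}" z] by (simp add: disjoint_family_on_def)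
  then have "(\<lambda>l. K {} z) \<longlonglongrightarrow> 0"
    by (rule summable_LIMSEQ_zero[OF sums_summable])
  then show ?thesis
    by (simp add: LIMSEQ_const_iff)
qed

lemma kernel_finite_sum:
  fixes E :: "nat \<Rightarrow> (real^'n) set"
  assumes E: "\<forall>l<k. E l \<in> sets PS" and disj: "disjoint_family_on E {..<k}"
  shows "(\<Sum>l<k. K (E l) z) = K (\<Union>l<k. E l) z"
proof -
  define E' where "E' l = (if l < k then E l else {})" for l
  have "range E' \<subseteq> sets PS" "disjoint_family E'"
    using E disj by (auto simp: E'_def disjoint_family_on_def)
  then have "(\<lambda>l. K (E' l) z) sums K (\<Union>l. E' l) z"
    by (rule kernel_sums)
  moreover have "(\<lambda>l. K (E' l) z) sums (\<Sum>l<k. K (E' l) z)"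
    by (rule sums_finite) (auto simp: E'_def kernel_empty)
  moreover have "(\<Union>l. E' l) = (\<Union>l<k. E l)"
    by (auto simp: E'_def split: if_splits)
  ultimately show ?thesis
    using sums_unique2 by (force simp: E'_def)
qed

lemma kernel_le_one:
  assumes B: "B \<in> sets PS" and z: "z \<in> prob_simplex"
  shows "K B z \<le> 1"
proof -
  define E where "E l = (if l = (0::nat) then B else prob_simplex - B)" for l
  have "(\<Sum>l<2. K (E l) z) = K (\<Union>l<2. E l) z"
    using B prob_simplex_in_sets_PS by (intro kernel_finite_sum) (auto simp: E_def disjoint_family_on_def)
  moreover have "(\<Union>l<2. E l) = prob_simplex"
    using sets_PS_subset[OF B] by (auto simp: E_def eval_nat_numeral lessThan_Suc)
  moreover have "0 \<le> K (prob_simplex - B) z"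
    using B prob_simplex_in_sets_PS by (intro kernel_nonneg) auto
  ultimately show ?thesis
    using kernel_space[OF z] by (simp add: eval_nat_numeral lessThan_Suc E_def)
qed

lemma abs_kernel_le_one: "B \<in> sets PS \<Longrightarrow> z \<in> prob_simplex \<Longrightarrow> \<bar>K B z\<bar> \<le> 1"
  using kernel_nonneg kernel_le_one by (simp add: abs_le_iff)

lemma integral_kernel_space:
  "\<rho> \<in> signed_measures \<Longrightarrow> integral\<^sup>L (jordan_pos \<rho>) (K prob_simplex) = positive_variation \<rho> prob_simplex"
  using Bochner_Integration.integral_cong[OF refl, of "jordan_pos \<rho>" "K prob_simplex" "\<lambda>_. 1"]
  by (simp add: kernel_space measure_jordan_pos prob_simplex_in_sets_PS)

lemma kernel_transform_signed_measure:
  assumes \<mu>: "\<mu> \<in> signed_measures"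
  shows "kernel_transform K \<mu> \<in> signed_measures"
  unfolding signed_measures_def
proof (intro CollectI conjI allI impI)
  show "kernel_transform K \<mu> A = 0" if "A \<notin> sets PS" for A
    using that by (simp add: kernel_transform_def)
  show "kernel_transform K \<mu> {} = 0"
    by (simp add: kernel_transform_def kernel_empty signed_integral_def)
  fix E :: "nat \<Rightarrow> (real^'n) set"
  assume E: "range E \<subseteq> sets PS" and disj: "disjoint_family E"
  have partial: "(\<Sum>l<N. K (E l) z) = K (\<Union>l<N. E l) z" for N z
    using E disj by (intro kernel_finite_sum) (auto intro: disjoint_family_on_mono)
  have "(\<lambda>N. signed_integral \<mu> (\<lambda>z. \<Sum>l<N. K (E l) z)) \<longlonglongrightarrow> signed_integral \<mu> (K (\<Union>l. E l))"
  proof (rule signed_integral_tendsto[OF \<mu>, where K=1])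
    show "(\<lambda>z. \<Sum>l<N. K (E l) z) \<in> borel_measurable PS" for N
      using E measurable_kernel by auto
    show "K (\<Union>l. E l) \<in> borel_measurable PS"
      using E by (intro measurable_kernel) auto
    show "\<bar>\<Sum>l<N. K (E l) z\<bar> \<le> 1" if "z \<in> prob_simplex" for N z
      unfolding partial using E that by (intro abs_kernel_le_one) auto
    show "(\<lambda>N. \<Sum>l<N. K (E l) z) \<longlonglongrightarrow> K (\<Union>l. E l) z" for z
      using kernel_sums[OF E disj] by (simp add: sums_def)
  qed
  moreover have "signed_integral \<mu> (\<lambda>z. \<Sum>l<N. K (E l) z) = (\<Sum>l<N. signed_integral \<mu> (K (E l)))" for N
    using E measurable_kernel abs_kernel_le_one by (intro signed_integral_sum[OF \<mu>, where K=1]) auto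
  ultimately show "(\<lambda>l. kernel_transform K \<mu> (E l)) sums kernel_transform K \<mu> (\<Union>l. E l)"
    using E by (simp add: kernel_transform_def sums_def subset_eq sets.countable_UN)
qed

lemma kernel_transform_linear:
  assumes "\<mu> \<in> signed_measures" "\<nu> \<in> signed_measures"
  shows "kernel_transform K (\<lambda>A. a * \<mu> A + b * \<nu> A) = (\<lambda>A. a * kernel_transform K \<mu> A + b * kernel_transform K \<nu> A)"
  using assms measurable_kernel abs_kernel_le_one
  by (auto simp: fun_eq_iff kernel_transform_def intro!: signed_integral_linear)

lemma kernel_transform_space:
  assumes \<mu>: "\<mu> \<in> signed_measures"
  shows "kernel_transform K \<mu> prob_simplex = \<mu> prob_simplex"
proof -
  have "signed_integral \<mu> (K prob_simplex) = signed_integral \<mu> (indicator prob_simplex)"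
    by (rule signed_integral_cong) (simp add: kernel_space)
  then show ?thesis
    by (simp add: kernel_transform_def prob_simplex_in_sets_PS signed_integral_indicator[OF \<mu>])
qed

lemma tv_norm_kernel_transform_le:
  assumes \<mu>: "\<mu> \<in> signed_measures"
  shows "tv_norm (kernel_transform K \<mu>) \<le> tv_norm \<mu>"
proof (rule tv_norm_le)
  fix k :: nat and E :: "nat \<Rightarrow> (real^'n) set"
  assume E: "\<forall>i<k. E i \<in> sets PS" and disj: "disjoint_family_on E {..<k}"
    and cover: "(\<Union>i<k. E i) = prob_simplex"
  have total: "(\<Sum>l<k. integral\<^sup>L (jordan_pos \<rho>) (K (E l))) = positive_variation \<rho> prob_simplex"
    if \<rho>: "\<rho> \<in> signed_measures" for \<rho>
  proof -
    have "(\<Sum>l<k. integral\<^sup>L (jordan_pos \<rho>) (K (E l))) = integral\<^sup>L (jordan_pos \<rho>) (\<lambda>z. \<Sum>l<k. K (E l) z)"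
      using E measurable_kernel abs_kernel_le_one
      by (intro Bochner_Integration.integral_sum[symmetric] integrable_jordan_pos[OF \<rho>, where K=1]) auto
    also have "\<dots> = integral\<^sup>L (jordan_pos \<rho>) (K prob_simplex)"
      using kernel_finite_sum[OF E disj] cover by simp
    finally show ?thesis
      using integral_kernel_space[OF \<rho>] by simp
  qed
  have "\<bar>kernel_transform K \<mu> (E l)\<bar>
      \<le> integral\<^sup>L (jordan_pos \<mu>) (K (E l)) + integral\<^sup>L (jordan_pos (\<lambda>A. - \<mu> A)) (K (E l))"
    if "l < k" for l
    using E that kernel_nonneg
    by (auto simp: kernel_transform_def signed_integral_def jordan_neg_def abs_le_iff
        intro!: integral_nonneg_AE)
  then have "(\<Sum>l<k. \<bar>kernel_transform K \<mu> (E l)\<bar>)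
      \<le> (\<Sum>l<k. integral\<^sup>L (jordan_pos \<mu>) (K (E l)) + integral\<^sup>L (jordan_pos (\<lambda>A. - \<mu> A)) (K (E l)))"
    by (intro sum_mono) auto
  also have "\<dots> = tv_norm \<mu>"
    using total[OF \<mu>] total[OF signed_measures_uminus[OF \<mu>]]
    by (simp add: sum.distrib tv_norm_eq_variation[OF \<mu>])
  finally show "(\<Sum>l<k. \<bar>kernel_transform K \<mu> (E l)\<bar>) \<le> tv_norm \<mu>" .
qed

text \<open>The norm is attained at a point mass, whose total mass is preserved.\<close>
lemma kernel_transform_operator_norm:
  defines "S \<equiv> {tv_norm (kernel_transform K \<mu>) | \<mu>. \<mu> \<in> signed_measures \<and> tv_norm \<mu> \<le> 1}"
  shows "bdd_above S \<and> Sup S = 1"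
proof -
  have le_1: "x \<le> 1" if "x \<in> S" for x
    using that tv_norm_kernel_transform_le by (force simp: S_def)
  define N where "N = return PS (axis undefined 1 :: real^'n)"
  have "prob_space N"
    unfolding N_def using axis_in_prob_simplex by (intro prob_space_return) (simp add: space_PS)
  then have N: "finite_measure N" "sets N = sets PS" "measure N prob_simplex = 1"
    using prob_space.axioms(1) prob_space.prob_space[of N] by (auto simp: N_def space_PS)
  define \<delta> where "\<delta> = measure N"
  have \<delta>: "\<delta> \<in> signed_measures" "tv_norm \<delta> = 1" "\<delta> prob_simplex = 1"
    using finite_measure_in_signed_measures[OF N(1,2)] tv_norm_measure[OF N(1,2)] N(3)
    by (simp_all add: \<delta>_def)
  have "1 \<le> tv_norm (kernel_transform K \<delta>)"
    using abs_le_tv_norm[OF kernel_transform_signed_measure[OF \<delta>(1)] prob_simplex_in_sets_PS]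
    by (simp add: kernel_transform_space \<delta>)
  moreover have "tv_norm (kernel_transform K \<delta>) \<in> S"
    using \<delta> by (auto simp: S_def)
  ultimately have "1 \<in> S"
    using le_1 by (metis antisym)
  then show ?thesis
    using le_1 by (intro conjI bdd_aboveI[of _ 1] cSup_eq_maximum) auto
qed

end

section \<open>The belief-update kernel\<close>

lemma alpha_nonneg:
  assumes "stochastic T" "stochastic (M i)" "z \<in> prob_simplex"
  shows "0 \<le> alpha T M i y z"
  using assms unfolding alpha_def stochastic_def prob_simplex_def
  by (intro sum_nonneg mult_nonneg_nonneg) auto

lemma sum_alpha:
  assumes "stochastic T" "stochastic (M i)" "z \<in> prob_simplex"
  shows "(\<Sum>y\<in>UNIV. alpha T M i y z) = 1"
proof -
  have "(\<Sum>y\<in>UNIV. alpha T M i y z) = (\<Sum>x\<in>UNIV. (\<Sum>j\<in>UNIV. z $ j * T $ j $ x) * (\<Sum>y\<in>UNIV. M i $ x $ y))"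
    unfolding alpha_def by (subst sum.swap) (simp add: sum_distrib_left)
  also have "\<dots> = (\<Sum>x\<in>UNIV. \<Sum>j\<in>UNIV. z $ j * T $ j $ x)"
    using assms(2) by (simp add: stochastic_def)
  also have "\<dots> = (\<Sum>j\<in>UNIV. z $ j * (\<Sum>x\<in>UNIV. T $ j $ x))"
    by (subst sum.swap) (simp add: sum_distrib_left)
  also have "\<dots> = 1"
    using assms(1,3) by (simp add: stochastic_def prob_simplex_def)
  finally show ?thesis .
qed

lemma alpha_le_one:
  assumes "stochastic T" "stochastic (M i)" "z \<in> prob_simplex"
  shows "alpha T M i y z \<le> 1"
proof -
  have "alpha T M i y z \<le> (\<Sum>y'\<in>UNIV. alpha T M i y' z)"
    using assms by (intro member_le_sum alpha_nonneg) auto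
  then show ?thesis
    using sum_alpha[of T M i z, OF assms] by simp
qed

lemma rupd_in_prob_simplex:
  assumes "stochastic T" "stochastic (M i)" "z \<in> prob_simplex" "0 < alpha T M i y z"
  shows "rupd T M i y z \<in> prob_simplex"
proof -
  have rupd: "rupd T M i y z $ k = (\<Sum>j\<in>UNIV. M i $ k $ y * T $ j $ k * z $ j) / alpha T M i y z" for k
    unfolding rupd_def by (simp add: axis_def if_distrib cong: if_cong)
  have "0 \<le> rupd T M i y z $ k" for k
    unfolding rupd using assms unfolding stochastic_def prob_simplex_def
    by (intro divide_nonneg_pos sum_nonneg mult_nonneg_nonneg) auto
  moreover have "(\<Sum>k\<in>UNIV. \<Sum>j\<in>UNIV. M i $ k $ y * T $ j $ k * z $ j) = alpha T M i y z"
    unfolding alpha_def by (rule sum.cong[OF refl]) (simp add: sum_distrib_left mult_ac)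
  ultimately show ?thesis
    using assms(4) by (simp add: prob_simplex_def rupd sum_divide_distrib[symmetric])
qed

definition belief_term ::
    "real^'n::finite^'n \<Rightarrow> ('o \<Rightarrow> real^'m::finite^'n) \<Rightarrow> (real^'n \<Rightarrow> 'o) \<Rightarrow> 'o \<Rightarrow> 'm \<Rightarrow> (real^'n) set
      \<Rightarrow> real^'n \<Rightarrow> real" where
  "belief_term T M g i y B z =
     (if g z = i \<and> alpha T M i y z > 0 then alpha T M i y z * indicator B (rupd T M i y z) else 0)"

definition belief_kernel ::
    "real^'n::finite^'n \<Rightarrow> ('o::finite \<Rightarrow> real^'m::finite^'n) \<Rightarrow> (real^'n \<Rightarrow> 'o) \<Rightarrow> (real^'n) set
      \<Rightarrow> real^'n \<Rightarrow> real" where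
  "belief_kernel T M g B z = (\<Sum>i\<in>UNIV. \<Sum>y\<in>UNIV. belief_term T M g i y B z)"

lemma measurable_belief_term:
  assumes g: "g \<in> measurable PS (count_space UNIV)" and B: "B \<in> sets PS"
  shows "belief_term T M g i y B \<in> borel_measurable PS"
proof -
  have [measurable]: "B \<in> sets borel"
    using B unfolding PS_def by (auto simp: sets_restrict_space_iff prob_simplex_def)
  have [measurable]: "(\<lambda>z. alpha T M i y z) \<in> borel_measurable PS" "(\<lambda>z. rupd T M i y z) \<in> borel_measurable PS"
    unfolding PS_def alpha_def rupd_def by (intro measurable_restrict_space1; measurable)+
  show ?thesis
    unfolding belief_term_def using g by measurable
qed

lemma abs_belief_term_le_one:
  "stochastic T \<Longrightarrow> stochastic (M i) \<Longrightarrow> z \<in> prob_simplex \<Longrightarrow> \<bar>belief_term T M g i y B z\<bar> \<le> 1"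
  using alpha_le_one[of T M i z y] by (auto simp: belief_term_def indicator_def)

lemma belief_kernel_simplex_markov_kernel:
  assumes T: "stochastic T" and M: "\<And>i. stochastic (M i)" and g: "g \<in> measurable PS (count_space UNIV)"
  shows "simplex_markov_kernel (belief_kernel T M g)"
proof
  show "belief_kernel T M g B \<in> borel_measurable PS" if "B \<in> sets PS" for B
    unfolding belief_kernel_def using measurable_belief_term[OF g that] by measurable
  show "0 \<le> belief_kernel T M g B z" for B z
    unfolding belief_kernel_def belief_term_def by (intro sum_nonneg) auto
  show "(\<lambda>l. belief_kernel T M g (E l) z) sums belief_kernel T M g (\<Union>l. E l) z"
    if "disjoint_family E" for E z
    unfolding belief_kernel_def
  proof (intro sums_sum)
    fix i y
    show "(\<lambda>l. belief_term T M g i y (E l) z) sums belief_term T M g i y (\<Union>l. E l) z"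
      using indicator_sums[of E "rupd T M i y z"] that
      by (auto simp: belief_term_def disjoint_family_on_def intro: sums_mult)
  qed
  show "belief_kernel T M g prob_simplex z = 1" if z: "z \<in> prob_simplex" for z
  proof -
    have "belief_term T M g i y prob_simplex z = (if i = g z then alpha T M i y z else 0)" for i y
      using alpha_nonneg[of T M i z y, OF T M z] rupd_in_prob_simplex[of T M i z y, OF T M z]
      by (auto simp: belief_term_def)
    then have "(\<Sum>y\<in>UNIV. belief_term T M g i y prob_simplex z) = (if i = g z then 1 else 0)" for i
      using sum_alpha[of T M i z, OF T M z] by (cases "i = g z") simp_all
    then show ?thesis
      by (simp add: belief_kernel_def)
  qed
qed

lemma transF_eq_kernel_transform:
  fixes T :: "real^'n::finite^'n" and M :: "'o::finite \<Rightarrow> real^'m::finite^'n" and g :: "real^'n \<Rightarrow> 'o"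
  assumes T: "stochastic T" and M: "\<And>i. stochastic (M i)" and g: "g \<in> measurable PS (count_space UNIV)"
    and \<mu>: "\<mu> \<in> signed_measures"
  shows "transF T M g \<mu> = kernel_transform (belief_kernel T M g) \<mu>"
proof
  fix B :: "(real^'n) set"
  have "signed_integral \<mu> (belief_kernel T M g B)
      = (\<Sum>i\<in>UNIV. \<Sum>y\<in>UNIV. signed_integral \<mu> (belief_term T M g i y B))" if B: "B \<in> sets PS"
  proof -
    have "\<bar>\<Sum>y\<in>UNIV. belief_term T M g i y B z\<bar> \<le> of_nat CARD('m)" if "z \<in> prob_simplex" for i z
    proof -
      have "(\<Sum>y\<in>UNIV. \<bar>belief_term T M g i y B z\<bar>) \<le> of_nat CARD('m) * 1"
        using abs_belief_term_le_one[of T M, OF T M that] by (intro sum_bounded_above) auto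
      then show ?thesis
        using sum_abs[of "\<lambda>y. belief_term T M g i y B z" UNIV] by linarith
    qed
    then have "signed_integral \<mu> (belief_kernel T M g B)
        = (\<Sum>i\<in>UNIV. signed_integral \<mu> (\<lambda>z. \<Sum>y\<in>UNIV. belief_term T M g i y B z))"
      unfolding belief_kernel_def using measurable_belief_term[OF g B]
      by (intro signed_integral_sum[OF \<mu>, where K="of_nat CARD('m)"] borel_measurable_sum) auto
    also have "\<dots> = (\<Sum>i\<in>UNIV. \<Sum>y\<in>UNIV. signed_integral \<mu> (belief_term T M g i y B))"
      using measurable_belief_term[OF g B] abs_belief_term_le_one[of T M, OF T M]
      by (intro sum.cong refl signed_integral_sum[OF \<mu>, where K=1]) auto
    finally show ?thesis .
  qed
  moreover have "(\<lambda>z. if g z = i \<and> alpha T M i y z > 0 then alpha T M i y z * indicator B (rupd T M i y z) else 0)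
      = belief_term T M g i y B" for i y
    by (simp add: fun_eq_iff belief_term_def)
  ultimately show "transF T M g \<mu> B = kernel_transform (belief_kernel T M g) \<mu> B"
    by (simp add: transF_def kernel_transform_def)
qed

theorem lemma2p23:
  fixes T :: "real^'n::finite^'n"
    and M :: "'o::finite \<Rightarrow> real^'m::finite^'n"
    and g :: "real^'n \<Rightarrow> 'o"
  assumes "stochastic T"
    and "\<And>i. stochastic (M i)"
    and "g \<in> measurable PS (count_space UNIV)"
  shows "(\<forall>\<mu>\<in>signed_measures. transF T M g \<mu> \<in> signed_measures)
    \<and> (\<forall>\<mu>\<in>signed_measures. \<forall>\<nu>\<in>signed_measures. \<forall>a b::real.
          transF T M g (\<lambda>A. a * \<mu> A + b * \<nu> A)
            = (\<lambda>A. a * transF T M g \<mu> A + b * transF T M g \<nu> A))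
    \<and> bdd_above {tv_norm (transF T M g \<mu>) | \<mu>. \<mu> \<in> signed_measures \<and> tv_norm \<mu> \<le> 1}
    \<and> Sup {tv_norm (transF T M g \<mu>) | \<mu>. \<mu> \<in> signed_measures \<and> tv_norm \<mu> \<le> 1} = 1"
proof -
  interpret simplex_markov_kernel "belief_kernel T M g"
    using assms by (rule belief_kernel_simplex_markov_kernel)
  have F: "transF T M g \<mu> = kernel_transform (belief_kernel T M g) \<mu>" if "\<mu> \<in> signed_measures" for \<mu>
    using assms that by (rule transF_eq_kernel_transform)
  have "(\<forall>\<mu>\<in>signed_measures. transF T M g \<mu> \<in> signed_measures)"
    using F kernel_transform_signed_measure by simp
  moreover have "\<forall>\<mu>\<in>signed_measures. \<forall>\<nu>\<in>signed_measures. \<forall>a b::real.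
      transF T M g (\<lambda>A. a * \<mu> A + b * \<nu> A) = (\<lambda>A. a * transF T M g \<mu> A + b * transF T M g \<nu> A)"
  proof (intro ballI allI)
    fix \<mu> \<nu> :: "(real^'n) set \<Rightarrow> real" and a b :: real
    assume \<mu>: "\<mu> \<in> signed_measures" and \<nu>: "\<nu> \<in> signed_measures"
    show "transF T M g (\<lambda>A. a * \<mu> A + b * \<nu> A) = (\<lambda>A. a * transF T M g \<mu> A + b * transF T M g \<nu> A)"
      using F[OF signed_measures_lincomb[OF \<mu> \<nu>]] F[OF \<mu>] F[OF \<nu>] kernel_transform_linear[OF \<mu> \<nu>]
      by simp
  qed
  moreover have "{tv_norm (transF T M g \<mu>) | \<mu>. \<mu> \<in> signed_measures \<and> tv_norm \<mu> \<le> 1}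
      = {tv_norm (kernel_transform (belief_kernel T M g) \<mu>) | \<mu>. \<mu> \<in> signed_measures \<and> tv_norm \<mu> \<le> 1}"
    using F by metis
  ultimately show ?thesis
    using kernel_transform_operator_norm by simp
qed

end
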